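(* Let $n,m\ge1$, $r>0$, and let $\mathbf b_1,\dots,\mathbf b_m\in[0,\infty)^n$ be nonzero vectors. Put $D_{ij}=\frac{r}{m}(\mathbf b_i\cdot\mathbf b_j)$ and $\overline D=\max_{i,j}D_{ij}$. Define $\alpha^{(t)}\in\mathbb{R}^m$, $t\ge0$, by $\alpha^{(0)}_k=\sqrt{1/(\overline D m)}$ for all $k$, and, given $\alpha^{(t)}$: let $E_i^{(t)}=\sum_{j=1}^m D_{ij}\alpha^{(t)}_i\alpha^{(t)}_j-1$, choose $k=k_t$ with $|E^{(t)}_k|\ge|E^{(t)}_i|$ for all $i$, set $\alpha^{(t+1)}_i=\alpha^{(t)}_i$ for $i\neq k$ and $\alpha^{(t+1)}_k=\frac{-s+\sqrt{s^2+4D_{kk}}}{2D_{kk}}$ with $s=\sum_{i\ne k}D_{ik}\alpha^{(t)}_i$. Let $E^{(t)}=\sum_{i=1}^m|E^{(t)}_i|$ and $E^\infty=\lim_{t\to\infty}E^{(t)}$. If $E^\infty>0$, then there is $c>0$ such that for every $t\ge0$, with $k=k_t$, $$\big|\alpha^{(t+1)}_k-\alpha^{(t)}_k\big|\,D_{kk}\,\alpha^{(t)}_k\ \ge\ c .$$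
   Context: The limit $E^\infty$ exists because $(E^{(t)})$ is a nonincreasing sequence of nonnegative numbers. *)

theory Defs
  imports Complex_Main
begin

text \<open>Vectors b_1..b_m in [0,inf)^n are encoded as b :: nat => nat => real,
  with b i j the j-th coordinate (j < n) of the vector with index i < m (0-based).\<close>

definition dotp :: "nat \<Rightarrow> (nat \<Rightarrow> real) \<Rightarrow> (nat \<Rightarrow> real) \<Rightarrow> real" where
  "dotp n x y = (\<Sum>l<n. x l * y l)"

definition Dm :: "real \<Rightarrow> nat \<Rightarrow> nat \<Rightarrow> (nat \<Rightarrow> nat \<Rightarrow> real) \<Rightarrow> nat \<Rightarrow> nat \<Rightarrow> real" where
  "Dm r m n b i j = r / real m * dotp n (b i) (b j)"

definition Dbar :: "real \<Rightarrow> nat \<Rightarrow> nat \<Rightarrow> (nat \<Rightarrow> nat \<Rightarrow> real) \<Rightarrow> real" where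
  "Dbar r m n b = Max {Dm r m n b i j | i j. i < m \<and> j < m}"

definition Ei :: "real \<Rightarrow> nat \<Rightarrow> nat \<Rightarrow> (nat \<Rightarrow> nat \<Rightarrow> real) \<Rightarrow> (nat \<Rightarrow> real) \<Rightarrow> nat \<Rightarrow> real" where
  "Ei r m n b a i = (\<Sum>j<m. Dm r m n b i j * a i * a j) - 1"

definition Etot :: "real \<Rightarrow> nat \<Rightarrow> nat \<Rightarrow> (nat \<Rightarrow> nat \<Rightarrow> real) \<Rightarrow> (nat \<Rightarrow> real) \<Rightarrow> real" where
  "Etot r m n b a = (\<Sum>i<m. \<bar>Ei r m n b a i\<bar>)"

end

theory Submission
  imports Defs
begin

text \<open>Each step solves the pivot equation exactly, so the pivot residual drops to zero while the
  other residuals move by at most what it carried; hence the total residual decreases. Along the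
  iteration all coordinates stay in a fixed compact subinterval of \<open>(0, \<infinity>)\<close>: the residuals bound
  \<open>D\<^sub>i\<^sub>i \<alpha>\<^sub>i\<^sup>2\<close> from above, and the updated coordinate is the reciprocal of a bounded quantity.
  The pivot residual factors as \<open>(\<alpha>\<^sub>k - \<alpha>\<^sub>k') F\<close> with \<open>F\<close> bounded, and it is at least
  \<open>E\<^sup>\<infinity>/m\<close> by the pivot rule, which forces the step to be bounded below.\<close>

lemma Dm_sym: "Dm r m n b i j = Dm r m n b j i"
  unfolding Dm_def dotp_def by (simp add: mult.commute)

lemma Ei_eq: "Ei r m n b a i = a i * (\<Sum>j<m. Dm r m n b i j * a j) - 1"
  unfolding Ei_def by (simp add: sum_distrib_left mult.assoc mult.left_commute)

lemma Dm_nonneg: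
  assumes "r \<ge> 0" "\<And>l. l < n \<Longrightarrow> b i l \<ge> 0" "\<And>l. l < n \<Longrightarrow> b j l \<ge> 0"
  shows "Dm r m n b i j \<ge> 0"
  unfolding Dm_def dotp_def using assms by (intro mult_nonneg_nonneg sum_nonneg) auto

lemma Dm_diag_pos:
  assumes "r > 0" "m > 0" "l < n" "b i l \<noteq> 0"
  shows "Dm r m n b i i > 0"
proof -
  have "b i l * b i l \<le> dotp n (b i) (b i)"
    unfolding dotp_def by (rule member_le_sum) (use assms in auto)
  moreover have "b i l * b i l > 0"
    using assms(4) not_real_square_gt_zero by blast
  ultimately show ?thesis
    unfolding Dm_def using assms(1,2) by simp
qed

lemma Dm_le_Dbar:
  assumes "i < m" "j < m"
  shows "Dm r m n b i j \<le> Dbar r m n b"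
proof -
  have "{Dm r m n b i j | i j. i < m \<and> j < m} = (\<lambda>(i, j). Dm r m n b i j) ` ({..<m} \<times> {..<m})"
    by auto
  then have "finite {Dm r m n b i j | i j. i < m \<and> j < m}"
    by simp
  then show ?thesis
    unfolding Dbar_def by (rule Max_ge) (use assms in auto)
qed

lemma positive_root_quadratic:
  fixes d s x :: real
  assumes "d > 0" "x = (- s + sqrt (s\<^sup>2 + 4 * d)) / (2 * d)"
  shows "x * (s + d * x) = 1" and "x > 0"
proof -
  define q where "q = sqrt (s\<^sup>2 + 4 * d)"
  have q2: "q\<^sup>2 = s\<^sup>2 + 4 * d"
    unfolding q_def using assms(1) by (simp add: add_nonneg_pos)
  have "\<bar>s\<bar> < q"
    unfolding q_def using assms(1) real_sqrt_less_mono[of "s\<^sup>2" "s\<^sup>2 + 4 * d"] by simp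
  moreover have x2: "2 * d * x = q - s"
    using assms unfolding q_def by simp
  ultimately show "x > 0"
    using assms(1) by (smt (verit) zero_less_mult_iff)
  have "4 * d * (x * (s + d * x)) = (2 * d * x) * (2 * d * x + 2 * s)"
    by (simp add: algebra_simps)
  also have "\<dots> = q\<^sup>2 - s\<^sup>2"
    unfolding x2 by (simp add: algebra_simps power2_eq_square)
  finally show "x * (s + d * x) = 1"
    using q2 assms(1) by simp
qed

lemma sum_Dm_row_pivot:
  assumes "k < m"
  shows "(\<Sum>j<m. Dm r m n b k j * a j)
    = (\<Sum>i\<in>{..<m} - {k}. Dm r m n b i k * a i) + Dm r m n b k k * a k"
proof -
  have "(\<Sum>j<m. Dm r m n b k j * a j)
      = Dm r m n b k k * a k + (\<Sum>j\<in>{..<m} - {k}. Dm r m n b k j * a j)"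
    by (rule sum.remove) (use assms in auto)
  then show ?thesis
    by (simp add: Dm_sym)
qed

lemma sum_Dm_row_update:
  assumes "k < m" "\<And>i. i < m \<Longrightarrow> i \<noteq> k \<Longrightarrow> a' i = a i"
  shows "(\<Sum>j<m. Dm r m n b i j * a' j)
    = (\<Sum>j<m. Dm r m n b i j * a j) + Dm r m n b i k * (a' k - a k)"
proof -
  have "(\<Sum>j<m. Dm r m n b i j * a' j)
      = Dm r m n b i k * a' k + (\<Sum>j\<in>{..<m} - {k}. Dm r m n b i j * a j)"
    using sum.remove[of "{..<m}" k "\<lambda>j. Dm r m n b i j * a' j"] assms
    by (simp add: sum.cong[OF refl, of _ "\<lambda>j. Dm r m n b i j * a' j" "\<lambda>j. Dm r m n b i j * a j"])
  moreover have "(\<Sum>j<m. Dm r m n b i j * a j)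
      = Dm r m n b i k * a k + (\<Sum>j\<in>{..<m} - {k}. Dm r m n b i j * a j)"
    by (rule sum.remove) (use assms in auto)
  ultimately show ?thesis
    by (simp add: algebra_simps)
qed

lemma Ei_pivot_factor:
  assumes "k < m"
    and "s = (\<Sum>i\<in>{..<m} - {k}. Dm r m n b i k * a i)"
    and "x * (s + Dm r m n b k k * x) = 1"
  shows "Ei r m n b a k = (a k - x) * (s + Dm r m n b k k * (a k + x))"
proof -
  have "Ei r m n b a k = a k * (s + Dm r m n b k k * a k) - x * (s + Dm r m n b k k * x)"
    using assms sum_Dm_row_pivot[OF assms(1)] by (simp add: Ei_eq)
  then show ?thesis
    by (simp add: algebra_simps)
qed

text \<open>Only the pivot coordinate changes, and after the change the pivot residual vanishes.
  Every other residual moves by \<open>\<alpha>\<^sub>i D\<^sub>i\<^sub>k |\<alpha>\<^sub>k - \<alpha>\<^sub>k'|\<close>; these moves add up to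
  \<open>s |\<alpha>\<^sub>k - \<alpha>\<^sub>k'|\<close>, which is at most the old pivot residual by \<open>Ei_pivot_factor\<close>.\<close>

lemma Etot_pivot_update_le:
  assumes k: "k < m"
    and a_nonneg: "\<And>i. i < m \<Longrightarrow> a i \<ge> 0"
    and D_nonneg: "\<And>i j. i < m \<Longrightarrow> j < m \<Longrightarrow> Dm r m n b i j \<ge> 0"
    and other: "\<And>i. i < m \<Longrightarrow> i \<noteq> k \<Longrightarrow> a' i = a i"
    and s: "s = (\<Sum>i\<in>{..<m} - {k}. Dm r m n b i k * a i)"
    and pivot: "a' k * (s + Dm r m n b k k * a' k) = 1"
    and pivot_nonneg: "a' k \<ge> 0"
  shows "Etot r m n b a' \<le> Etot r m n b a"
proof -
  let ?D = "Dm r m n b" and ?E = "Ei r m n b a" and ?E' = "Ei r m n b a'"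
  let ?\<delta> = "\<bar>a k - a' k\<bar>"
  have row: "(\<Sum>j<m. ?D i j * a' j) = (\<Sum>j<m. ?D i j * a j) + ?D i k * (a' k - a k)" for i
    by (rule sum_Dm_row_update) (use k other in auto)
  have E'_pivot: "?E' k = 0"
    using row[of k] sum_Dm_row_pivot[OF k, of r n b a] s pivot by (simp add: Ei_eq algebra_simps)
  have E'_other: "\<bar>?E' i\<bar> \<le> \<bar>?E i\<bar> + ?D i k * a i * ?\<delta>" if "i \<in> {..<m} - {k}" for i
  proof -
    have "?E' i = ?E i + a i * ?D i k * (a' k - a k)"
      using that other[of i] unfolding Ei_eq row by (simp add: algebra_simps)
    moreover have "\<bar>a i * ?D i k * (a' k - a k)\<bar> = ?D i k * a i * ?\<delta>"
      using that a_nonneg D_nonneg k by (simp add: abs_mult abs_minus_commute)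
    ultimately show ?thesis
      by (metis abs_triangle_ineq)
  qed
  have s_nonneg: "s \<ge> 0"
    unfolding s using D_nonneg a_nonneg k by (auto intro!: sum_nonneg)
  have "?\<delta> * s \<le> ?\<delta> * (s + ?D k k * (a k + a' k))"
    using D_nonneg[OF k k] a_nonneg[OF k] pivot_nonneg by (simp add: mult_left_mono)
  also have "\<dots> = \<bar>?E k\<bar>"
    using Ei_pivot_factor[OF k s pivot] s_nonneg D_nonneg[OF k k] a_nonneg[OF k] pivot_nonneg
    by (simp add: abs_mult)
  finally have shift: "?\<delta> * s \<le> \<bar>?E k\<bar>" .
  have "Etot r m n b a' = (\<Sum>i\<in>{..<m} - {k}. \<bar>?E' i\<bar>)"
    unfolding Etot_def using sum.remove[of "{..<m}" k "\<lambda>i. \<bar>?E' i\<bar>"] k E'_pivot by simp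
  also have "\<dots> \<le> (\<Sum>i\<in>{..<m} - {k}. \<bar>?E i\<bar> + ?D i k * a i * ?\<delta>)"
    by (rule sum_mono) (rule E'_other)
  also have "\<dots> = (\<Sum>i\<in>{..<m} - {k}. \<bar>?E i\<bar>) + ?\<delta> * s"
    by (simp add: sum.distrib s sum_distrib_left sum_distrib_right mult.commute)
  also have "\<dots> \<le> (\<Sum>i\<in>{..<m} - {k}. \<bar>?E i\<bar>) + \<bar>?E k\<bar>"
    using shift by simp
  also have "\<dots> = Etot r m n b a"
    unfolding Etot_def using sum.remove[of "{..<m}" k "\<lambda>i. \<bar>?E i\<bar>"] k by simp
  finally show ?thesis .
qed

locale coordinate_descent =
  fixes n m :: nat and r :: real
    and b :: "nat \<Rightarrow> nat \<Rightarrow> real"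
    and \<alpha> :: "nat \<Rightarrow> nat \<Rightarrow> real"
    and kt :: "nat \<Rightarrow> nat"
  assumes m_pos: "m \<ge> 1" and r_pos: "r > 0"
    and b_nonneg: "\<And>i l. i < m \<Longrightarrow> l < n \<Longrightarrow> b i l \<ge> 0"
    and b_nonzero: "\<And>i. i < m \<Longrightarrow> \<exists>l<n. b i l \<noteq> 0"
    and init: "\<And>k. k < m \<Longrightarrow> \<alpha> 0 k = sqrt (1 / (Dbar r m n b * real m))"
    and k_range: "\<And>t. kt t < m"
    and k_max: "\<And>t i. i < m \<Longrightarrow>
        \<bar>Ei r m n b (\<alpha> t) (kt t)\<bar> \<ge> \<bar>Ei r m n b (\<alpha> t) i\<bar>"
    and step_other: "\<And>t i. i < m \<Longrightarrow> i \<noteq> kt t \<Longrightarrow> \<alpha> (Suc t) i = \<alpha> t i"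
    and step_k: "\<And>t. \<alpha> (Suc t) (kt t) =
        (let k = kt t; s = (\<Sum>i\<in>{..<m} - {k}. Dm r m n b i k * \<alpha> t i)
         in (- s + sqrt (s\<^sup>2 + 4 * Dm r m n b k k)) / (2 * Dm r m n b k k))"
begin

abbreviation D :: "nat \<Rightarrow> nat \<Rightarrow> real" where
  "D \<equiv> Dm r m n b"

abbreviation residual :: "nat \<Rightarrow> real" where
  "residual t \<equiv> Etot r m n b (\<alpha> t)"

definition pivot_coupling :: "nat \<Rightarrow> real" where
  "pivot_coupling t = (\<Sum>i\<in>{..<m} - {kt t}. D i (kt t) * \<alpha> t i)"

lemma D_nonneg: "i < m \<Longrightarrow> j < m \<Longrightarrow> D i j \<ge> 0"
  using Dm_nonneg r_pos b_nonneg by (simp add: less_imp_le)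

lemma D_diag_pos:
  assumes "i < m"
  shows "D i i > 0"
proof -
  obtain l where "l < n" "b i l \<noteq> 0"
    using b_nonzero[OF assms] by blast
  then show ?thesis
    using Dm_diag_pos r_pos m_pos by simp
qed

lemma Dbar_pos: "Dbar r m n b > 0"
  using Dm_le_Dbar[of 0 m 0 r n b] D_diag_pos[of 0] m_pos by simp

definition diag_min :: real where
  "diag_min = Min ((\<lambda>i. D i i) ` {..<m})"

lemma diag_min_pos: "diag_min > 0"
  and diag_min_le: "i < m \<Longrightarrow> diag_min \<le> D i i"
proof -
  have S: "finite ((\<lambda>i. D i i) ` {..<m})" "(\<lambda>i. D i i) ` {..<m} \<noteq> {}"
    using m_pos by (auto simp: lessThan_empty_iff)
  show "diag_min > 0"
    unfolding diag_min_def using Min_in[OF S] D_diag_pos by auto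
  show "i < m \<Longrightarrow> diag_min \<le> D i i"
    unfolding diag_min_def using S by auto
qed

lemma pivot_update:
  shows "\<alpha> (Suc t) (kt t) * (pivot_coupling t + D (kt t) (kt t) * \<alpha> (Suc t) (kt t)) = 1"
    and "\<alpha> (Suc t) (kt t) > 0"
proof -
  have "\<alpha> (Suc t) (kt t) = (- pivot_coupling t + sqrt ((pivot_coupling t)\<^sup>2 + 4 * D (kt t) (kt t)))
      / (2 * D (kt t) (kt t))"
    by (simp add: step_k pivot_coupling_def Let_def)
  from positive_root_quadratic[OF D_diag_pos[OF k_range] this]
  show "\<alpha> (Suc t) (kt t) * (pivot_coupling t + D (kt t) (kt t) * \<alpha> (Suc t) (kt t)) = 1"
    and "\<alpha> (Suc t) (kt t) > 0" .
qed

lemma alpha_pos: "i < m \<Longrightarrow> \<alpha> t i > 0"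
proof (induction t arbitrary: i)
  case 0
  then show ?case
    using init Dbar_pos m_pos by simp
next
  case (Suc t)
  then show ?case
    using pivot_update(2)[of t] step_other[of i t] by (cases "i = kt t") auto
qed

lemma alpha_nonneg: "i < m \<Longrightarrow> \<alpha> t i \<ge> 0"
  using alpha_pos less_imp_le by blast

lemma pivot_coupling_nonneg: "pivot_coupling t \<ge> 0"
  unfolding pivot_coupling_def using D_nonneg alpha_nonneg k_range
  by (auto intro!: sum_nonneg mult_nonneg_nonneg)

lemma residual_pivot_factor:
  "Ei r m n b (\<alpha> t) (kt t)
    = (\<alpha> t (kt t) - \<alpha> (Suc t) (kt t))
      * (pivot_coupling t + D (kt t) (kt t) * (\<alpha> t (kt t) + \<alpha> (Suc t) (kt t)))"
  by (rule Ei_pivot_factor[OF k_range pivot_coupling_def pivot_update(1)])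

lemma residual_decseq: "decseq residual"
proof (rule decseq_SucI)
  show "residual (Suc t) \<le> residual t" for t
    using Etot_pivot_update_le[OF k_range alpha_nonneg D_nonneg step_other pivot_coupling_def
        pivot_update(1)] pivot_update(2)[of t] by simp
qed

definition alpha_sup :: real where
  "alpha_sup = sqrt ((1 + residual 0) / diag_min)"

text \<open>\<open>D\<^sub>i\<^sub>i \<alpha>\<^sub>i\<^sup>2\<close> is one summand of \<open>1 + E\<^sub>i\<close>, and \<open>E\<^sub>i\<close> never exceeds the initial total residual.\<close>

lemma alpha_le_sup:
  assumes i: "i < m"
  shows "\<alpha> t i \<le> alpha_sup"
proof -
  have "diag_min * (\<alpha> t i)\<^sup>2 \<le> \<alpha> t i * (D i i * \<alpha> t i)"
    using mult_right_mono[OF diag_min_le[OF i] zero_le_power2[of "\<alpha> t i"]]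
    by (simp add: power2_eq_square mult.left_commute)
  also have "\<dots> \<le> \<alpha> t i * (\<Sum>j<m. D i j * \<alpha> t j)"
    by (rule mult_left_mono[OF member_le_sum alpha_nonneg[OF i]])
      (use i D_nonneg alpha_nonneg in auto)
  also have "\<dots> = Ei r m n b (\<alpha> t) i + 1"
    by (simp add: Ei_eq)
  also have "Ei r m n b (\<alpha> t) i \<le> residual t"
    using abs_ge_self member_le_sum[of i "{..<m}" "\<lambda>i. \<bar>Ei r m n b (\<alpha> t) i\<bar>"] i
    unfolding Etot_def by (fastforce intro: order_trans)
  also have "residual t \<le> residual 0"
    using residual_decseq by (simp add: decseq_def)
  finally have "(\<alpha> t i)\<^sup>2 \<le> (1 + residual 0) / diag_min"
    using diag_min_pos by (simp add: le_divide_eq mult.commute)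
  then show ?thesis
    unfolding alpha_sup_def by (rule real_le_rsqrt)
qed

lemma alpha_sup_pos: "alpha_sup > 0"
  using alpha_le_sup[of 0 0] alpha_pos[of 0 0] m_pos by simp

lemma D_alpha_le:
  assumes "i < m" "j < m" "l < m"
  shows "D i j * \<alpha> t l \<le> Dbar r m n b * alpha_sup"
  using Dm_le_Dbar[OF assms(1,2)] alpha_le_sup[OF assms(3)] alpha_nonneg[OF assms(3)]
    D_nonneg[OF assms(1,2)] Dbar_pos
  by (intro mult_mono) auto

lemma pivot_coupling_le: "pivot_coupling t \<le> real m * Dbar r m n b * alpha_sup"
proof -
  have "pivot_coupling t \<le> (\<Sum>i<m. D i (kt t) * \<alpha> t i)"
    unfolding pivot_coupling_def
    by (rule sum_mono2) (use D_nonneg alpha_nonneg k_range in \<open>auto intro!: mult_nonneg_nonneg\<close>)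
  also have "\<dots> \<le> (\<Sum>i<m. Dbar r m n b * alpha_sup)"
    by (rule sum_mono) (use D_alpha_le k_range in auto)
  finally show ?thesis
    by simp
qed

definition alpha_inf :: real where
  "alpha_inf = min (\<alpha> 0 0) (1 / ((real m + 1) * Dbar r m n b * alpha_sup))"

text \<open>The updated coordinate is \<open>1 / (s + D\<^sub>k\<^sub>k \<alpha>\<^sub>k')\<close>, and the denominator is bounded.\<close>

lemma pivot_update_ge: "1 / ((real m + 1) * Dbar r m n b * alpha_sup) \<le> \<alpha> (Suc t) (kt t)"
proof -
  let ?x = "\<alpha> (Suc t) (kt t)"
  let ?S = "pivot_coupling t + D (kt t) (kt t) * ?x"
  have "?S \<le> (real m + 1) * Dbar r m n b * alpha_sup"
    using pivot_coupling_le[of t] D_alpha_le[of "kt t" "kt t" "kt t" "Suc t"] k_range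
    by (simp add: algebra_simps)
  moreover have "?S > 0"
    using pivot_coupling_nonneg D_diag_pos[OF k_range] alpha_pos[OF k_range]
    by (simp add: add_nonneg_pos)
  ultimately have "1 / ((real m + 1) * Dbar r m n b * alpha_sup) \<le> 1 / ?S"
    by (intro divide_left_mono) auto
  also have "1 / ?S = ?x"
    using pivot_update(1)[of t] \<open>?S > 0\<close> by (simp add: field_simps)
  finally show ?thesis .
qed

lemma alpha_ge_inf: "i < m \<Longrightarrow> alpha_inf \<le> \<alpha> t i"
proof (induction t arbitrary: i)
  case 0
  then show ?case
    using init[of i] init[of 0] m_pos unfolding alpha_inf_def by simp
next
  case (Suc t)
  then show ?case
    using pivot_update_ge[of t] step_other[of i t] unfolding alpha_inf_def
    by (cases "i = kt t") auto
qed

lemma alpha_inf_pos: "alpha_inf > 0"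
  unfolding alpha_inf_def using alpha_pos[of 0 0] m_pos Dbar_pos alpha_sup_pos by simp

lemma pivot_residual_le_step:
  "\<bar>Ei r m n b (\<alpha> t) (kt t)\<bar>
    \<le> \<bar>\<alpha> (Suc t) (kt t) - \<alpha> t (kt t)\<bar> * ((real m + 2) * Dbar r m n b * alpha_sup)"
proof -
  let ?F = "pivot_coupling t + D (kt t) (kt t) * (\<alpha> t (kt t) + \<alpha> (Suc t) (kt t))"
  have "0 \<le> ?F"
    using pivot_coupling_nonneg D_nonneg[OF k_range k_range] alpha_nonneg[OF k_range] by simp
  moreover have "?F \<le> (real m + 2) * Dbar r m n b * alpha_sup"
    using pivot_coupling_le[of t] D_alpha_le[of "kt t" "kt t" "kt t" t]
      D_alpha_le[of "kt t" "kt t" "kt t" "Suc t"] k_range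
    by (simp add: algebra_simps)
  ultimately show ?thesis
    unfolding residual_pivot_factor by (simp add: abs_mult abs_minus_commute mult_left_mono)
qed

lemma pivot_residual_ge:
  assumes "lim residual > 0"
  shows "\<exists>\<epsilon>>0. \<forall>t. \<epsilon> \<le> \<bar>Ei r m n b (\<alpha> t) (kt t)\<bar>"
proof -
  have "\<forall>t. 0 \<le> residual t"
    unfolding Etot_def by (auto intro: sum_nonneg)
  then obtain L where L: "residual \<longlonglongrightarrow> L" "\<And>t. L \<le> residual t"
    using decseq_convergent[OF residual_decseq] by blast
  have "L / real m \<le> \<bar>Ei r m n b (\<alpha> t) (kt t)\<bar>" for t
  proof -
    have "residual t \<le> (\<Sum>i<m. \<bar>Ei r m n b (\<alpha> t) (kt t)\<bar>)"
      unfolding Etot_def by (rule sum_mono) (use k_max in auto)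
    then have "L \<le> real m * \<bar>Ei r m n b (\<alpha> t) (kt t)\<bar>"
      using L(2)[of t] by simp
    then show ?thesis
      using m_pos by (simp add: divide_le_eq mult.commute)
  qed
  moreover have "L / real m > 0"
    using assms limI[OF L(1)] m_pos by simp
  ultimately show ?thesis
    by blast
qed

theorem pivot_step_lower_bound:
  assumes "lim residual > 0"
  shows "\<exists>c>0. \<forall>t. \<bar>\<alpha> (Suc t) (kt t) - \<alpha> t (kt t)\<bar> * D (kt t) (kt t) * \<alpha> t (kt t) \<ge> c"
proof -
  obtain \<epsilon> where \<epsilon>: "\<epsilon> > 0" "\<And>t. \<epsilon> \<le> \<bar>Ei r m n b (\<alpha> t) (kt t)\<bar>"
    using pivot_residual_ge[OF assms] by blast
  define M where "M = (real m + 2) * Dbar r m n b * alpha_sup"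
  have M_pos: "M > 0"
    unfolding M_def using Dbar_pos alpha_sup_pos by simp
  have "\<epsilon> / M * diag_min * alpha_inf
      \<le> \<bar>\<alpha> (Suc t) (kt t) - \<alpha> t (kt t)\<bar> * D (kt t) (kt t) * \<alpha> t (kt t)" for t
  proof -
    have "\<epsilon> / M \<le> \<bar>\<alpha> (Suc t) (kt t) - \<alpha> t (kt t)\<bar>"
      using order_trans[OF \<epsilon>(2) pivot_residual_le_step, of t] M_pos
      unfolding M_def by (simp add: pos_divide_le_eq)
    then show ?thesis
      using \<epsilon>(1) M_pos diag_min_pos diag_min_le[OF k_range] D_diag_pos[OF k_range]
        alpha_inf_pos alpha_ge_inf[OF k_range]
      by (intro mult_mono) (simp_all add: less_imp_le)
  qed
  moreover have "\<epsilon> / M * diag_min * alpha_inf > 0"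
    using \<epsilon>(1) M_pos diag_min_pos alpha_inf_pos by simp
  ultimately show ?thesis
    by blast
qed

end

theorem lemma4:
  fixes n m :: nat and r :: real
    and b :: "nat \<Rightarrow> nat \<Rightarrow> real"
    and \<alpha> :: "nat \<Rightarrow> nat \<Rightarrow> real"
    and kt :: "nat \<Rightarrow> nat"
  assumes "n \<ge> 1" and "m \<ge> 1" and "r > 0"
    and b_nonneg: "\<And>i l. i < m \<Longrightarrow> l < n \<Longrightarrow> b i l \<ge> 0"
    and b_nonzero: "\<And>i. i < m \<Longrightarrow> \<exists>l<n. b i l \<noteq> 0"
    and init: "\<And>k. k < m \<Longrightarrow> \<alpha> 0 k = sqrt (1 / (Dbar r m n b * real m))"
    and k_range: "\<And>t. kt t < m"
    and k_max: "\<And>t i. i < m \<Longrightarrow>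
        \<bar>Ei r m n b (\<alpha> t) (kt t)\<bar> \<ge> \<bar>Ei r m n b (\<alpha> t) i\<bar>"
    and step_other: "\<And>t i. i < m \<Longrightarrow> i \<noteq> kt t \<Longrightarrow> \<alpha> (Suc t) i = \<alpha> t i"
    and step_k: "\<And>t. \<alpha> (Suc t) (kt t) =
        (let k = kt t; s = (\<Sum>i\<in>{..<m} - {k}. Dm r m n b i k * \<alpha> t i)
         in (- s + sqrt (s\<^sup>2 + 4 * Dm r m n b k k)) / (2 * Dm r m n b k k))"
    and Einf_pos: "lim (\<lambda>t. Etot r m n b (\<alpha> t)) > 0"
  shows "\<exists>c>0. \<forall>t. \<bar>\<alpha> (Suc t) (kt t) - \<alpha> t (kt t)\<bar> * Dm r m n b (kt t) (kt t) * \<alpha> t (kt t) \<ge> c"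
proof -
  interpret coordinate_descent n m r b \<alpha> kt
    by unfold_locales (fact assms)+
  show ?thesis
    using pivot_step_lower_bound Einf_pos by blast
qed

end
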